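(* Let $\theta$ be a discrete valuation on Johnstone's dcpo $\mathcal J$ (Scott topology) with total mass $\theta(\mathcal J)=1-r$, where $r>0$. Then $\theta+r\mu$ is not the supremum of a directed family of discrete valuations, where $\mu(U)=1$ for every non-empty Scott-open $U$ and $\mu(\emptyset)=0$.
   Context: Johnstone's dcpo: $\mathcal J=\mathbb N\times(\mathbb N\cup\{\infty\})$ ordered by $(a,b)\le(c,d)$ iff either ($a=c$ and $b\le d$) or ($d=\infty$ and $b\le c$). A valuation is a strict, monotone, modular map from the Scott-open sets to $[0,\infty]$; continuous valuations are ordered pointwise (stochastic order), and the supremum of a directed family is computed pointwise. A discrete valuation is one of the form $\sum_{i=1}^\infty r_i\delta_{x_i}$ ($r_i\in[0,\infty)$, $\delta_x$ the Dirac valuation at $x$). *)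

theory Defs
  imports "HOL-Library.Extended_Nat" "HOL-Library.Extended_Nonnegative_Real"
begin

text \<open>Johnstone's dcpo J = N x (N u {infinity}).\<close>
type_synonym jpt = "nat \<times> enat"

definition jle :: "jpt \<Rightarrow> jpt \<Rightarrow> bool" where
  "jle p q \<longleftrightarrow> (fst p = fst q \<and> snd p \<le> snd q) \<or> (snd q = \<infinity> \<and> snd p \<le> enat (fst q))"

definition j_directed :: "jpt set \<Rightarrow> bool" where
  "j_directed D \<longleftrightarrow> D \<noteq> {} \<and> (\<forall>a\<in>D. \<forall>b\<in>D. \<exists>c\<in>D. jle a c \<and> jle b c)"

definition j_is_lub :: "jpt set \<Rightarrow> jpt \<Rightarrow> bool" where
  "j_is_lub D x \<longleftrightarrow> (\<forall>d\<in>D. jle d x) \<and> (\<forall>y. (\<forall>d\<in>D. jle d y) \<longrightarrow> jle x y)"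

definition scott_open :: "jpt set \<Rightarrow> bool" where
  "scott_open U \<longleftrightarrow> (\<forall>x y. x \<in> U \<longrightarrow> jle x y \<longrightarrow> y \<in> U) \<and>
     (\<forall>D x. j_directed D \<longrightarrow> j_is_lub D x \<longrightarrow> x \<in> U \<longrightarrow> D \<inter> U \<noteq> {})"

text \<open>Valuations are represented as maps on sets; only their values on Scott-open sets matter.
  A discrete valuation agrees on Scott-open sets with some sum of r_i delta_{x_i}.\<close>
definition discrete_valuation :: "(jpt set \<Rightarrow> ennreal) \<Rightarrow> bool" where
  "discrete_valuation \<nu> \<longleftrightarrow> (\<exists>(rs :: nat \<Rightarrow> real) (xs :: nat \<Rightarrow> jpt). (\<forall>i. 0 \<le> rs i) \<and>
     (\<forall>U. scott_open U \<longrightarrow> \<nu> U = (\<Sum>i. ennreal (rs i) * indicator U (xs i))))"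

definition val_directed :: "(jpt set \<Rightarrow> ennreal) set \<Rightarrow> bool" where
  "val_directed F \<longleftrightarrow> F \<noteq> {} \<and> (\<forall>a\<in>F. \<forall>b\<in>F. \<exists>c\<in>F.
     \<forall>U. scott_open U \<longrightarrow> a U \<le> c U \<and> b U \<le> c U)"

definition is_directed_sup :: "(jpt set \<Rightarrow> ennreal) set \<Rightarrow> (jpt set \<Rightarrow> ennreal) \<Rightarrow> bool" where
  "is_directed_sup F v \<longleftrightarrow> val_directed F \<and> (\<forall>U. scott_open U \<longrightarrow> v U = (SUP \<nu>\<in>F. \<nu> U))"

definition mu_J :: "jpt set \<Rightarrow> ennreal" where
  "mu_J U = (if U = {} then 0 else 1)"

end

theory Submission
  imports Defs
begin

(* Let F be a directed family of discrete valuations whose supremum sigma has finite total mass.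
   Some nu0 in F carries almost all of sigma(J) on finitely many atoms, all in columns < K. For a
   finite set B of non-maximal points in columns >= K, the Scott-open set of points not below B
   contains these atoms, so every nu >= nu0 in F gives B almost no mass: beyond column K, the
   members of F above nu0 live on the maximal points (c, infinity).
   The corners {(a, b). a >= k and b >= k} are Scott open. If sigma gave each corner mass >= r,
   one could repeatedly pick nu in F with mass about r on a corner lying to the right of all
   points chosen so far, hence on finitely many new maximal points. Maximal points are below
   nothing else, so the old points keep their neighbourhood mass, and every neighbourhood of the
   accumulated finite set would get mass >= n r / 2 for all n, exceeding sigma(J).
   So sigma(corner k) tends to 0, whereas theta + r mu gives every corner mass >= r. *)

lemma jle_refl [simp]: "jle x x"
  by (simp add: jle_def)

lemma jle_trans: "jle x y \<Longrightarrow> jle y z \<Longrightarrow> jle x z"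
  unfolding jle_def by (auto intro: order_trans)

lemma jle_maximal: "snd m = \<infinity> \<Longrightarrow> jle m y \<Longrightarrow> y = m"
  unfolding jle_def by (cases m; cases y) auto

lemma jle_same_column: "jle p q \<Longrightarrow> snd q \<noteq> \<infinity> \<Longrightarrow> fst p = fst q"
  unfolding jle_def by auto

lemma j_directed_column:
  assumes "j_directed D" and "\<forall>d\<in>D. snd d \<noteq> \<infinity>"
  obtains c where "\<forall>d\<in>D. fst d = c"
proof -
  obtain d0 where "d0 \<in> D"
    using assms(1) unfolding j_directed_def by blast
  have "fst d = fst d0" if "d \<in> D" for d
  proof -
    obtain u where "u \<in> D" "jle d u" "jle d0 u"
      using assms(1) \<open>d \<in> D\<close> \<open>d0 \<in> D\<close> unfolding j_directed_def by blast
    then show ?thesis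
      using assms(2) jle_same_column by metis
  qed
  then show thesis
    using that by blast
qed

lemma scott_open_UNIV: "scott_open UNIV"
  unfolding scott_open_def j_directed_def by auto

lemma scott_open_Int:
  assumes "scott_open U" and "scott_open V"
  shows "scott_open (U \<inter> V)"
  unfolding scott_open_def
proof (intro conjI allI impI)
  fix x y
  assume "x \<in> U \<inter> V" "jle x y"
  then show "y \<in> U \<inter> V"
    using assms unfolding scott_open_def by blast
next
  fix D x
  assume D: "j_directed D" "j_is_lub D x" "x \<in> U \<inter> V"
  then obtain d1 d2 where "d1 \<in> D \<inter> U" "d2 \<in> D \<inter> V"
    using assms unfolding scott_open_def by blast
  moreover obtain d where "d \<in> D" "jle d1 d" "jle d2 d"
    using D(1) calculation unfolding j_directed_def by blast
  ultimately show "D \<inter> (U \<inter> V) \<noteq> {}"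
    using assms unfolding scott_open_def by blast
qed

definition not_below :: "jpt set \<Rightarrow> jpt set" where
  "not_below B = {z. \<forall>b\<in>B. \<not> jle z b}"

lemma scott_open_not_below_point: "scott_open {z. \<not> jle z b}"
  unfolding scott_open_def j_is_lub_def using jle_trans by blast

lemma scott_open_not_below:
  assumes "finite B"
  shows "scott_open (not_below B)"
  using assms
proof (induction B rule: finite_induct)
  case empty
  then show ?case
    by (simp add: not_below_def scott_open_UNIV)
next
  case (insert b B)
  have "not_below (insert b B) = {z. \<not> jle z b} \<inter> not_below B"
    unfolding not_below_def by blast
  then show ?case
    using scott_open_Int[OF scott_open_not_below_point insert.IH] by simp
qed

definition corner :: "nat \<Rightarrow> jpt set" where
  "corner k = {p. k \<le> fst p \<and> enat k \<le> snd p}"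

lemma corner_nonempty: "corner k \<noteq> {}"
  unfolding corner_def by force

lemma maximal_not_below_corner:
  assumes "snd m = \<infinity>" and "fst m < k" and "b \<in> corner k"
  shows "\<not> jle m b"
proof
  assume "jle m b"
  then have "b = m"
    using assms(1) jle_maximal by blast
  then show False
    using assms(2,3) unfolding corner_def by simp
qed

lemma scott_open_corner: "scott_open (corner k)"
  unfolding scott_open_def
proof (intro conjI allI impI)
  fix x y
  assume "x \<in> corner k" "jle x y"
  then show "y \<in> corner k"
    unfolding corner_def jle_def
    by (cases x; cases y) (auto intro: order_trans, metis enat_ord_simps(1) order_trans)
next
  fix D x
  assume D: "j_directed D" "j_is_lub D x" "x \<in> corner k"
  show "D \<inter> corner k \<noteq> {}"
  proof
    assume disjoint: "D \<inter> corner k = {}"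
    have below: "\<And>d. d \<in> D \<Longrightarrow> jle d x"
      using D(2) unfolding j_is_lub_def by blast
    have "\<forall>d\<in>D. snd d \<noteq> \<infinity>"
      using jle_maximal below disjoint D(3) by blast
    then obtain c where column: "\<forall>d\<in>D. fst d = c"
      using D(1) j_directed_column by blast
    show False
    proof (cases "k \<le> c")
      case True
      have low: "\<And>d. d \<in> D \<Longrightarrow> snd d < enat k"
        using disjoint column True unfolding corner_def by (force simp: not_le)
      then have "k \<noteq> 0"
        using D(1) unfolding j_directed_def by (metis enat_0 ex_in_conv not_less_zero)
      have "jle d (c, enat (k - 1))" if "d \<in> D" for d
        using low[OF that] column that \<open>k \<noteq> 0\<close> unfolding jle_def
        by (cases "snd d") auto
      then have "jle x (c, enat (k - 1))"
        using D(2) unfolding j_is_lub_def by blast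
      then show False
        using D(3) \<open>k \<noteq> 0\<close> unfolding jle_def corner_def by (cases "snd x") auto
    next
      case False
      have "jle d (c, \<infinity>)" if "d \<in> D" for d
        using column that unfolding jle_def by auto
      then have "jle x (c, \<infinity>)"
        using D(2) unfolding j_is_lub_def by blast
      then show False
        using False D(3) unfolding jle_def corner_def
        by auto (metis enat_ord_simps(1) order_trans)
    qed
  qed
qed

definition disc_mass :: "(nat \<Rightarrow> real) \<Rightarrow> (nat \<Rightarrow> 'a) \<Rightarrow> 'a set \<Rightarrow> real" where
  "disc_mass s y U = (\<Sum>i. s i * indicator U (y i))"

definition disc_mass_prefix :: "nat \<Rightarrow> (nat \<Rightarrow> real) \<Rightarrow> (nat \<Rightarrow> 'a) \<Rightarrow> 'a set \<Rightarrow> real" where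
  "disc_mass_prefix N s y U = (\<Sum>i<N. s i * indicator U (y i))"

lemma disc_mass_prefix_mono:
  assumes "\<And>i. 0 \<le> s i" and "\<And>i. i < N \<Longrightarrow> y i \<in> U \<Longrightarrow> y i \<in> U'"
  shows "disc_mass_prefix N s y U \<le> disc_mass_prefix N s y U'"
  unfolding disc_mass_prefix_def using assms by (intro sum_mono) (auto simp: indicator_def)

lemma disc_mass_prefix_split:
  "disc_mass_prefix N s y U = disc_mass_prefix N s y (U \<inter> A) + disc_mass_prefix N s y (U - A)"
  unfolding disc_mass_prefix_def sum.distrib[symmetric] by (rule sum.cong) (auto simp: indicator_def)

context
  fixes s :: "nat \<Rightarrow> real" and y :: "nat \<Rightarrow> 'a"
  assumes nonneg: "\<And>i. 0 \<le> s i" and summable: "summable s"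
begin

lemma summable_disc_mass: "summable (\<lambda>i. s i * indicator U (y i))"
  by (rule summable_comparison_test[OF _ summable]) (auto simp: nonneg indicator_def)

lemma disc_mass_nonneg: "0 \<le> disc_mass s y U"
  unfolding disc_mass_def by (rule suminf_nonneg) (auto simp: summable_disc_mass nonneg)

lemma disc_mass_mono: "U \<subseteq> V \<Longrightarrow> disc_mass s y U \<le> disc_mass s y V"
  unfolding disc_mass_def
  by (rule suminf_le[OF _ summable_disc_mass summable_disc_mass]) (auto simp: nonneg indicator_def)

lemma disc_mass_prefix_le: "disc_mass_prefix N s y U \<le> disc_mass s y U"
  unfolding disc_mass_def disc_mass_prefix_def
  by (rule sum_le_suminf) (auto simp: summable_disc_mass nonneg)

lemma disc_mass_Compl: "disc_mass s y (- U) = disc_mass s y UNIV - disc_mass s y U"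
proof -
  have "s i * indicator U (y i) + s i * indicator (- U) (y i) = s i * indicator UNIV (y i)" for i
    by (auto simp: indicator_def)
  then show ?thesis
    unfolding disc_mass_def using suminf_add[OF summable_disc_mass summable_disc_mass, of U "- U"]
    by simp
qed

lemma disc_mass_uniform_tail:
  assumes "0 < e"
  obtains N where "\<And>U. disc_mass s y U \<le> disc_mass_prefix N s y U + e"
proof -
  obtain N where N: "\<And>n. n \<ge> N \<Longrightarrow> norm (\<Sum>i. s (i + n)) < e"
    using suminf_exist_split[OF assms summable] by blast
  have "disc_mass s y U \<le> disc_mass_prefix N s y U + e" for U
  proof -
    have "disc_mass s y U = (\<Sum>i. s (i + N) * indicator U (y (i + N))) + disc_mass_prefix N s y U"
      unfolding disc_mass_def disc_mass_prefix_def
      by (rule suminf_split_initial_segment[OF summable_disc_mass])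
    moreover have "(\<Sum>i. s (i + N) * indicator U (y (i + N))) \<le> (\<Sum>i. s (i + N))"
      by (rule suminf_le[OF _ summable_ignore_initial_segment[OF summable_disc_mass]
            summable_ignore_initial_segment[OF summable]])
        (auto simp: nonneg indicator_def)
    moreover have "(\<Sum>i. s (i + N)) < e"
      using N[of N] by simp
    ultimately show ?thesis
      by simp
  qed
  then show thesis
    using that by blast
qed

end

definition discrete_repr :: "(nat \<Rightarrow> real) \<Rightarrow> (nat \<Rightarrow> jpt) \<Rightarrow> (jpt set \<Rightarrow> ennreal) \<Rightarrow> bool" where
  "discrete_repr s y \<nu> \<longleftrightarrow> (\<forall>i. 0 \<le> s i) \<and> summable s \<and>
     (\<forall>U. scott_open U \<longrightarrow> \<nu> U = ennreal (disc_mass s y U))"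

lemma discrete_valuation_repr:
  assumes "discrete_valuation \<nu>" and "\<nu> UNIV < top"
  obtains s y where "discrete_repr s y \<nu>"
proof -
  obtain s y where nonneg: "\<forall>i. 0 \<le> s i"
    and \<nu>: "\<forall>U. scott_open U \<longrightarrow> \<nu> U = (\<Sum>i. ennreal (s i) * indicator U (y i))"
    using assms(1) unfolding discrete_valuation_def by blast
  have ennreal_term: "ennreal (s i) * indicator U (y i) = ennreal (s i * indicator U (y i))" for i U
    using nonneg by (simp add: ennreal_mult ennreal_indicator)
  have "(\<Sum>i. ennreal (s i)) = \<nu> UNIV"
    using \<nu> scott_open_UNIV by simp
  then have "summable s"
    using assms(2) nonneg summable_suminf_not_top by fastforce
  moreover have "\<nu> U = ennreal (disc_mass s y U)" if "scott_open U" for U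
    unfolding disc_mass_def using that \<nu> nonneg \<open>summable s\<close>
    by (simp add: ennreal_term suminf_ennreal2 summable_disc_mass)
  ultimately show thesis
    using that nonneg unfolding discrete_repr_def by blast
qed

lemma discrete_repr_le_iff:
  assumes "discrete_repr s y \<nu>" and "scott_open U"
  shows "ennreal a \<le> \<nu> U \<longleftrightarrow> a \<le> disc_mass s y U"
  using assms disc_mass_nonneg[of s y U] unfolding discrete_repr_def by (auto simp: ennreal_le_iff2)

lemma discrete_repr_less:
  assumes "discrete_repr s y \<nu>" and "scott_open U" and "ennreal a < \<nu> U"
  shows "a < disc_mass s y U"
  using assms disc_mass_nonneg[of s y U] unfolding discrete_repr_def
  by (cases "0 \<le> a") (auto simp: ennreal_less_iff)

definition val_le :: "(jpt set \<Rightarrow> ennreal) \<Rightarrow> (jpt set \<Rightarrow> ennreal) \<Rightarrow> bool" where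
  "val_le \<nu> \<nu>' \<longleftrightarrow> (\<forall>U. scott_open U \<longrightarrow> \<nu> U \<le> \<nu>' U)"

lemma val_le_trans: "val_le \<nu>1 \<nu>2 \<Longrightarrow> val_le \<nu>2 \<nu>3 \<Longrightarrow> val_le \<nu>1 \<nu>3"
  unfolding val_le_def by (meson order_trans)

lemma discrete_repr_mono:
  assumes "discrete_repr s y \<nu>" and "discrete_repr t x \<nu>'" and "val_le \<nu> \<nu>'" and "scott_open U"
  shows "disc_mass s y U \<le> disc_mass t x U"
proof -
  have "\<nu> U = ennreal (disc_mass s y U)"
    using assms(1,4) unfolding discrete_repr_def by blast
  moreover have "\<nu> U \<le> \<nu>' U"
    using assms(3,4) unfolding val_le_def by blast
  ultimately show ?thesis
    using discrete_repr_le_iff[OF assms(2,4)] by simp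
qed

definition nbhd_mass_ge :: "(jpt set \<Rightarrow> ennreal) \<Rightarrow> jpt set \<Rightarrow> real \<Rightarrow> bool" where
  "nbhd_mass_ge \<nu> C c \<longleftrightarrow> (\<forall>V. scott_open V \<longrightarrow> C \<subseteq> V \<longrightarrow> ennreal c \<le> \<nu> V)"

lemma prefix_mass_outside_corner:
  assumes "nbhd_mass_ge \<nu> C c" and "val_le \<nu> \<nu>'" and repr: "discrete_repr s y \<nu>'"
    and "C \<subseteq> {m. snd m = \<infinity>}" and "\<forall>m\<in>C. fst m < k"
    and "scott_open V" and "C \<subseteq> V"
    and tail: "\<And>U. disc_mass s y U \<le> disc_mass_prefix N s y U + e"
  shows "c - e \<le> disc_mass_prefix N s y (V - corner k)"
proof -
  define G where "G = y ` {i. i < N \<and> y i \<in> corner k}"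
  define V' where "V' = V \<inter> not_below G"
  have "scott_open V'"
    unfolding V'_def G_def by (intro scott_open_Int scott_open_not_below assms) simp
  moreover have "C \<subseteq> V'"
  proof
    fix m
    assume "m \<in> C"
    have "\<not> jle m b" if "b \<in> G" for b
      using that \<open>m \<in> C\<close> assms(4,5) maximal_not_below_corner unfolding G_def by blast
    then show "m \<in> V'"
      using \<open>m \<in> C\<close> assms(7) unfolding V'_def not_below_def by blast
  qed
  ultimately have "ennreal c \<le> \<nu>' V'"
    using assms(1,2) unfolding nbhd_mass_ge_def val_le_def by (meson order_trans)
  then have "c \<le> disc_mass s y V'"
    using discrete_repr_le_iff[OF repr \<open>scott_open V'\<close>] by blast
  moreover have "disc_mass_prefix N s y V' \<le> disc_mass_prefix N s y (V - corner k)"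
    using repr unfolding discrete_repr_def
    by (intro disc_mass_prefix_mono) (auto simp: V'_def G_def not_below_def)
  ultimately show ?thesis
    using tail[of V'] by linarith
qed

lemma prefix_mass_inside_corner:
  assumes repr: "discrete_repr s y \<nu>" and "ennreal a < \<nu> (corner k)"
    and thin: "disc_mass s y (corner k \<inter> {p. snd p \<noteq> \<infinity>}) < e"
    and tail: "\<And>U. disc_mass s y U \<le> disc_mass_prefix N s y U + e"
    and maximal_atoms: "y ` {i. i < N \<and> y i \<in> corner k} \<inter> {m. snd m = \<infinity>} \<subseteq> V"
  shows "a - 2 * e < disc_mass_prefix N s y (V \<inter> corner k)"
proof -
  let ?fin = "{p. snd p \<noteq> \<infinity>}"
  have s: "\<And>i. 0 \<le> s i" "summable s"
    using repr unfolding discrete_repr_def by auto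
  have "a < disc_mass s y (corner k)"
    using discrete_repr_less[OF repr scott_open_corner assms(2)] .
  moreover have "disc_mass_prefix N s y (corner k \<inter> ?fin) < e"
    using thin disc_mass_prefix_le[OF s, where y = y and N = N and U = "corner k \<inter> ?fin"]
    by linarith
  moreover have "disc_mass_prefix N s y (corner k - ?fin) \<le> disc_mass_prefix N s y (V \<inter> corner k)"
    using s(1) by (rule disc_mass_prefix_mono) (use maximal_atoms in auto)
  ultimately show ?thesis
    using tail[of "corner k"] disc_mass_prefix_split[of N s y "corner k" ?fin] by linarith
qed

locale discrete_directed_sup =
  fixes F :: "(jpt set \<Rightarrow> ennreal) set" and \<sigma> :: "jpt set \<Rightarrow> ennreal"
  assumes discrete: "\<And>\<nu>. \<nu> \<in> F \<Longrightarrow> discrete_valuation \<nu>"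
    and directed_sup: "is_directed_sup F \<sigma>"
    and finite_total: "\<sigma> UNIV < top"
begin

definition total :: real where
  "total = enn2real (\<sigma> UNIV)"

lemma total_nonneg: "0 \<le> total"
  by (simp add: total_def)

lemma sup_UNIV: "\<sigma> UNIV = ennreal total"
  using finite_total by (simp add: total_def)

lemma sup_eq: "scott_open U \<Longrightarrow> \<sigma> U = (SUP \<nu>\<in>F. \<nu> U)"
  using directed_sup unfolding is_directed_sup_def by blast

lemma F_nonempty: "F \<noteq> {}"
  using directed_sup unfolding is_directed_sup_def val_directed_def by blast

lemma upper_bound:
  assumes "\<nu>1 \<in> F" and "\<nu>2 \<in> F"
  obtains \<nu> where "\<nu> \<in> F" and "val_le \<nu>1 \<nu>" and "val_le \<nu>2 \<nu>"
  using directed_sup assms that unfolding is_directed_sup_def val_directed_def val_le_def by blast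

lemma le_sup: "\<nu> \<in> F \<Longrightarrow> scott_open U \<Longrightarrow> \<nu> U \<le> \<sigma> U"
  by (auto simp: sup_eq intro: SUP_upper)

lemma exists_above: "scott_open U \<Longrightarrow> a < \<sigma> U \<Longrightarrow> \<exists>\<nu>\<in>F. a < \<nu> U"
  by (simp add: sup_eq less_SUP_iff)

lemma repr_exists:
  assumes "\<nu> \<in> F"
  obtains s y where "discrete_repr s y \<nu>"
proof -
  have "\<nu> UNIV < top"
    using le_sup[OF assms scott_open_UNIV] finite_total by (rule order.strict_trans1)
  then show thesis
    using discrete_valuation_repr[OF discrete[OF assms]] that by blast
qed

lemma disc_mass_le_total:
  assumes "\<nu> \<in> F" and repr: "discrete_repr s y \<nu>"
  shows "disc_mass s y U \<le> total"
proof -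
  have "ennreal (disc_mass s y UNIV) = \<nu> UNIV"
    using repr scott_open_UNIV unfolding discrete_repr_def by simp
  also have "\<dots> \<le> ennreal total"
    using le_sup[OF assms(1) scott_open_UNIV] sup_UNIV by simp
  finally have "disc_mass s y UNIV \<le> total"
    by (simp add: total_nonneg)
  moreover have "disc_mass s y U \<le> disc_mass s y UNIV"
    using repr unfolding discrete_repr_def by (intro disc_mass_mono) auto
  ultimately show ?thesis
    by linarith
qed

lemma nbhd_mass_ge_le_total:
  assumes "\<nu> \<in> F" and "nbhd_mass_ge \<nu> C c"
  shows "c \<le> total"
proof -
  have "ennreal c \<le> \<nu> UNIV"
    using assms(2) scott_open_UNIV unfolding nbhd_mass_ge_def by blast
  also have "\<dots> \<le> ennreal total"
    using le_sup[OF assms(1) scott_open_UNIV] sup_UNIV by simp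
  finally show ?thesis
    using total_nonneg by (auto simp: ennreal_le_iff2)
qed

lemma exists_nearly_total:
  assumes "0 < e"
  obtains \<nu> s y where "\<nu> \<in> F" and "discrete_repr s y \<nu>" and "total - e < disc_mass s y UNIV"
proof (cases "total - e < 0")
  case True
  obtain \<nu> s y where "\<nu> \<in> F" and "discrete_repr s y \<nu>"
    using F_nonempty repr_exists by blast
  moreover have "0 \<le> disc_mass s y UNIV"
    using calculation(2) unfolding discrete_repr_def by (intro disc_mass_nonneg) auto
  ultimately show thesis
    using that True by fastforce
next
  case False
  then have "ennreal (total - e) < \<sigma> UNIV"
    using assms sup_UNIV by (simp add: ennreal_lessI)
  then obtain \<nu> where "\<nu> \<in> F" and "ennreal (total - e) < \<nu> UNIV"
    using exists_above scott_open_UNIV by blast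
  moreover obtain s y where "discrete_repr s y \<nu>"
    using repr_exists calculation(1) by blast
  ultimately show thesis
    using that discrete_repr_less scott_open_UNIV by blast
qed

definition thin_beyond :: "nat \<Rightarrow> real \<Rightarrow> (jpt set \<Rightarrow> ennreal) \<Rightarrow> bool" where
  "thin_beyond K e \<nu> \<longleftrightarrow> (\<forall>\<nu>'\<in>F. val_le \<nu> \<nu>' \<longrightarrow>
     (\<forall>s y. discrete_repr s y \<nu>' \<longrightarrow> disc_mass s y {p. K \<le> fst p \<and> snd p \<noteq> \<infinity>} < e))"

lemma thin_beyond_mono: "thin_beyond K e \<nu> \<Longrightarrow> val_le \<nu> \<nu>' \<Longrightarrow> thin_beyond K e \<nu>'"
  using val_le_trans unfolding thin_beyond_def by blast

lemma thin_beyond_corner: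
  assumes "thin_beyond K e \<nu>" and "\<nu>' \<in> F" and "val_le \<nu> \<nu>'" and repr: "discrete_repr s y \<nu>'"
    and "K \<le> k"
  shows "disc_mass s y (corner k \<inter> {p. snd p \<noteq> \<infinity>}) < e"
proof -
  have "disc_mass s y (corner k \<inter> {p. snd p \<noteq> \<infinity>})
      \<le> disc_mass s y {p. K \<le> fst p \<and> snd p \<noteq> \<infinity>}"
    using repr \<open>K \<le> k\<close> unfolding discrete_repr_def
    by (intro disc_mass_mono) (auto simp: corner_def)
  moreover have "disc_mass s y {p. K \<le> fst p \<and> snd p \<noteq> \<infinity>} < e"
    using assms(1-4) unfolding thin_beyond_def by blast
  ultimately show ?thesis
    by linarith
qed

lemma exists_thin_beyond:
  assumes "0 < e"
  obtains \<nu>0 K where "\<nu>0 \<in> F" and "thin_beyond K e \<nu>0"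
proof -
  define d where "d = e / 3"
  have "0 < d"
    using assms by (simp add: d_def)
  obtain \<nu>0 t x where \<nu>0: "\<nu>0 \<in> F" "discrete_repr t x \<nu>0"
    and nearly_total: "total - d < disc_mass t x UNIV"
    using exists_nearly_total[OF \<open>0 < d\<close>] by blast
  have t: "\<And>i. 0 \<le> t i" "summable t"
    using \<nu>0(2) unfolding discrete_repr_def by auto
  obtain N0 where N0: "\<And>U. disc_mass t x U \<le> disc_mass_prefix N0 t x U + d"
    using disc_mass_uniform_tail[OF t \<open>0 < d\<close>] by blast
  obtain K where K: "\<And>i. i < N0 \<Longrightarrow> fst (x i) < K"
    using finite_nat_bounded[of "(\<lambda>i. fst (x i)) ` {..<N0}"] by auto
  let ?A = "{p. K \<le> fst p \<and> snd p \<noteq> \<infinity>}"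
  have "disc_mass s y ?A < e"
    if \<nu>: "\<nu> \<in> F" "val_le \<nu>0 \<nu>" and repr: "discrete_repr s y \<nu>" for \<nu> s y
  proof -
    have s: "\<And>i. 0 \<le> s i" "summable s"
      using repr unfolding discrete_repr_def by auto
    obtain N where N: "\<And>U. disc_mass s y U \<le> disc_mass_prefix N s y U + d"
      using disc_mass_uniform_tail[OF s \<open>0 < d\<close>] by blast
    define V where "V = not_below (y ` {i. i < N \<and> y i \<in> ?A})"
    have "scott_open V"
      unfolding V_def by (rule scott_open_not_below) simp
    have "x i \<in> V" if "i < N0" for i
      using K[OF that] jle_same_column unfolding V_def not_below_def by fastforce
    then have "disc_mass_prefix N0 t x V = disc_mass_prefix N0 t x UNIV"
      unfolding disc_mass_prefix_def by (intro sum.cong) auto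
    then have "total - 2 * d < disc_mass t x V"
      using N0[of UNIV] nearly_total disc_mass_prefix_le[OF t, where y = x and N = N0 and U = V]
      by linarith
    also have "\<dots> \<le> disc_mass s y V"
      using discrete_repr_mono[OF \<nu>0(2) repr \<nu>(2) \<open>scott_open V\<close>] .
    finally have "disc_mass s y (- V) < 2 * d"
      using disc_mass_Compl[OF s, where y = y and U = V] disc_mass_le_total[OF \<nu>(1) repr, of UNIV]
      by linarith
    moreover have "disc_mass_prefix N s y ?A \<le> disc_mass_prefix N s y (- V)"
      using s(1) by (rule disc_mass_prefix_mono) (auto simp: V_def not_below_def)
    ultimately show ?thesis
      using N[of ?A] disc_mass_prefix_le[OF s, where y = y and N = N and U = "- V"] d_def
      by linarith
  qed
  then show thesis
    using that \<nu>0(1) unfolding thin_beyond_def by blast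
qed

lemma nbhd_mass_grows:
  assumes thin: "thin_beyond K e \<nu>" and "\<nu> \<in> F" and "0 < e"
    and C: "finite C" "C \<subseteq> {m. snd m = \<infinity>}" "\<forall>m\<in>C. fst m < k" and "nbhd_mass_ge \<nu> C c"
    and "K \<le> k" and "ennreal a < \<sigma> (corner k)"
  obtains \<nu>' C' where "\<nu>' \<in> F" and "val_le \<nu> \<nu>'" and "finite C'" and "C' \<subseteq> {m. snd m = \<infinity>}"
    and "nbhd_mass_ge \<nu>' C' (c + a - 3 * e)"
proof -
  obtain \<nu>1 where "\<nu>1 \<in> F" and \<nu>1: "ennreal a < \<nu>1 (corner k)"
    using exists_above[OF scott_open_corner assms(9)] by blast
  then obtain \<nu>' where \<nu>': "\<nu>' \<in> F" "val_le \<nu> \<nu>'" "val_le \<nu>1 \<nu>'"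
    using upper_bound \<open>\<nu> \<in> F\<close> by blast
  obtain s y where repr: "discrete_repr s y \<nu>'"
    using repr_exists \<nu>'(1) by blast
  have s: "\<And>i. 0 \<le> s i" "summable s"
    using repr unfolding discrete_repr_def by auto
  obtain N where N: "\<And>U. disc_mass s y U \<le> disc_mass_prefix N s y U + e"
    using disc_mass_uniform_tail[OF s \<open>0 < e\<close>] by blast
  define C' where "C' = C \<union> (y ` {i. i < N \<and> y i \<in> corner k} \<inter> {m. snd m = \<infinity>})"
  have "ennreal (c + a - 3 * e) \<le> \<nu>' V" if V: "scott_open V" "C' \<subseteq> V" for V
  proof -
    have "c - e \<le> disc_mass_prefix N s y (V - corner k)"
      using prefix_mass_outside_corner[OF assms(7) \<nu>'(2) repr C(2,3) V(1) _ N] V(2)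
      unfolding C'_def by blast
    moreover have "ennreal a < \<nu>' (corner k)"
      using \<nu>1 \<nu>'(3) scott_open_corner unfolding val_le_def by (meson order_less_le_trans)
    then have "a - 2 * e < disc_mass_prefix N s y (V \<inter> corner k)"
      using prefix_mass_inside_corner[OF repr _ thin_beyond_corner[OF thin \<nu>'(1,2) repr \<open>K \<le> k\<close>]]
        N V(2) unfolding C'_def by blast
    ultimately have "c + a - 3 * e < disc_mass_prefix N s y V"
      using disc_mass_prefix_split[of N s y V "corner k"] by linarith
    also have "\<dots> \<le> disc_mass s y V"
      by (rule disc_mass_prefix_le[OF s])
    finally show ?thesis
      using discrete_repr_le_iff[OF repr V(1)] by simp
  qed
  moreover have "finite C'" and "C' \<subseteq> {m. snd m = \<infinity>}"
    using C unfolding C'_def by auto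
  ultimately show thesis
    using that \<nu>' unfolding nbhd_mass_ge_def by blast
qed

lemma corner_mass_vanishes:
  assumes "0 < r"
  shows "\<exists>k. \<sigma> (corner k) < ennreal r"
proof (rule ccontr)
  assume "\<not> ?thesis"
  then have heavy: "ennreal r \<le> \<sigma> (corner k)" for k
    by (simp add: not_less)
  define e where "e = r / 8"
  have "0 < e"
    using assms by (simp add: e_def)
  obtain \<nu>0 K where "\<nu>0 \<in> F" and "thin_beyond K e \<nu>0"
    using exists_thin_beyond[OF \<open>0 < e\<close>] by blast
  have "\<exists>\<nu> C. \<nu> \<in> F \<and> thin_beyond K e \<nu> \<and> finite C \<and> C \<subseteq> {m. snd m = \<infinity>} \<and>
      nbhd_mass_ge \<nu> C (real n * (r / 2))" for n
  proof (induction n)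
    case 0
    then show ?case
      using \<open>\<nu>0 \<in> F\<close> \<open>thin_beyond K e \<nu>0\<close> unfolding nbhd_mass_ge_def by auto
  next
    case (Suc n)
    then obtain \<nu> C where \<nu>: "\<nu> \<in> F" "thin_beyond K e \<nu>"
      and C: "finite C" "C \<subseteq> {m. snd m = \<infinity>}" "nbhd_mass_ge \<nu> C (real n * (r / 2))"
      by blast
    obtain k0 where "fst ` C \<subseteq> {..<k0}"
      using finite_nat_bounded C(1) by blast
    then have fresh: "\<forall>m\<in>C. fst m < max K k0"
      by fastforce
    have "ennreal (r - e) < ennreal r"
      using \<open>0 < e\<close> assms by (intro ennreal_lessI) auto
    also have "\<dots> \<le> \<sigma> (corner (max K k0))"
      by (rule heavy)
    finally have "ennreal (r - e) < \<sigma> (corner (max K k0))" .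
    then obtain \<nu>' C' where \<nu>': "\<nu>' \<in> F" "val_le \<nu> \<nu>'"
      and C': "finite C'" "C' \<subseteq> {m. snd m = \<infinity>}"
        "nbhd_mass_ge \<nu>' C' (real n * (r / 2) + (r - e) - 3 * e)"
      using nbhd_mass_grows[OF \<nu>(2,1) \<open>0 < e\<close> C(1,2) fresh C(3) max.cobounded1] by blast
    have "real n * (r / 2) + (r - e) - 3 * e = real (Suc n) * (r / 2)"
      by (simp add: e_def algebra_simps)
    then show ?case
      using thin_beyond_mono[OF \<nu>(2) \<nu>'(2)] \<nu>'(1) C' by metis
  qed
  then have "real n * (r / 2) \<le> total" for n
    using nbhd_mass_ge_le_total by blast
  moreover obtain n where "total < real n * (r / 2)"
    using ex_less_of_nat_mult[of "r / 2" total] assms by auto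
  ultimately show False
    by (meson not_le)
qed

end

theorem proposition3p12:
  fixes \<theta> :: "jpt set \<Rightarrow> ennreal" and r :: real
  assumes "discrete_valuation \<theta>"
    and "r > 0"
    and "\<theta> UNIV + ennreal r = 1"
  shows "\<not> (\<exists>F. (\<forall>\<nu>\<in>F. discrete_valuation \<nu>) \<and>
              is_directed_sup F (\<lambda>U. \<theta> U + ennreal r * mu_J U))"
proof
  assume "\<exists>F. (\<forall>\<nu>\<in>F. discrete_valuation \<nu>) \<and> is_directed_sup F (\<lambda>U. \<theta> U + ennreal r * mu_J U)"
  then obtain F where "\<forall>\<nu>\<in>F. discrete_valuation \<nu>"
    and "is_directed_sup F (\<lambda>U. \<theta> U + ennreal r * mu_J U)"
    by blast
  then interpret discrete_directed_sup F "\<lambda>U. \<theta> U + ennreal r * mu_J U"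
    using assms(3) by unfold_locales (auto simp: mu_J_def)
  obtain k where "\<theta> (corner k) + ennreal r * mu_J (corner k) < ennreal r"
    using corner_mass_vanishes[OF assms(2)] by blast
  moreover have "mu_J (corner k) = 1"
    using corner_nonempty by (simp add: mu_J_def)
  ultimately show False
    by (simp add: add_increasing)
qed

end
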